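(* Every binary orchard network $N$ admits an HGT-consistent labelling $t$ with the following additional property: whenever two distinct nodes $a,b$ of $N$ satisfy $t(a)=t(b)$, one of them is a parent of the other, the parent being a tree node and the child being a reticulation.
   Context: A (directed phylogenetic) network on a finite taxa set $X$ is a directed acyclic graph without parallel arcs whose nodes are of the following types: a unique root (indegree 0, outdegree 1); tree nodes (indegree 1, outdegree at least 2); reticulations (indegree at least 2, outdegree 1); leaves (indegree 1, outdegree 0), the leaves being bijectively labelled by $X$. Non-leaf nodes are called internal. A network is binary if every tree node and every reticulation has total degree (indegree plus outdegree) exactly 3. A tree is a network without reticulations. Orchard networks: An ordered pair of leaves $(x,y)$ is a cherry if $x$ and $y$ have a common parent; it is a reticulated cherry if the parent $p_x$ of $x$ is a reticulation and $p_x$ and $y$ have a common parent. Let $p_x,p_y$ be the parents of $x,y$. Reducing $(x,y)$ in a network $N$: if $(x,y)$ is a cherry, delete $x$ and suppress $p_x$ if it now has indegree 1 and outdegree 1; if $(x,y)$ is a reticulated cherry, delete the arc $(p_y,p_x)$ and suppress any resulting node of indegree 1 and outdegree 1; otherwise do nothing. (Suppressing a node $v$ with one parent $u$ and one child $w$ means deleting $v$ and adding the arc $(u,w)$.) For a sequence $S$ of ordered pairs, $NS$ denotes the result of reducing the pairs of $S$ in order. $N$ is orchard if there is a sequence $S$ such that $NS$ is a tree with exactly one leaf. HGT-consistent labelling: Let $N$ be a binary network with node set $V$. An HGT-consistent labelling of $N$ is a map $t:V\to\mathbb{R}$ such that (1) for every arc $(u,v)$, $t(u)\le t(v)$, and equality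 is allowed only if $v$ is a reticulation; (2) every internal node $u$ has a child $v$ with $t(u)<t(v)$; (3) for every reticulation $r$ with parents $u$ and $v$, exactly one of $t(u)=t(r)$ and $t(v)=t(r)$ holds. *)

theory Defs
  imports Main "HOL.Real"
begin

text \<open>A directed graph is given by a node set and an arc set (a set of pairs, so there
  are no parallel arcs). Leaves are identified with their taxon labels (the node type),
  which is harmless since the labelling is a bijection between leaves and X.\<close>

type_synonym 'a graph = "'a set \<times> ('a \<times> 'a) set"

definition nodes :: "'a graph \<Rightarrow> 'a set" where "nodes N = fst N"
definition arcs :: "'a graph \<Rightarrow> ('a \<times> 'a) set" where "arcs N = snd N"

definition indeg :: "'a graph \<Rightarrow> 'a \<Rightarrow> nat" where
  "indeg N v = card {u. (u, v) \<in> arcs N}"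
definition outdeg :: "'a graph \<Rightarrow> 'a \<Rightarrow> nat" where
  "outdeg N v = card {w. (v, w) \<in> arcs N}"

definition is_root :: "'a graph \<Rightarrow> 'a \<Rightarrow> bool" where
  "is_root N v \<longleftrightarrow> v \<in> nodes N \<and> indeg N v = 0 \<and> outdeg N v = 1"
definition is_tree_node :: "'a graph \<Rightarrow> 'a \<Rightarrow> bool" where
  "is_tree_node N v \<longleftrightarrow> v \<in> nodes N \<and> indeg N v = 1 \<and> outdeg N v \<ge> 2"
definition is_reticulation :: "'a graph \<Rightarrow> 'a \<Rightarrow> bool" where
  "is_reticulation N v \<longleftrightarrow> v \<in> nodes N \<and> indeg N v \<ge> 2 \<and> outdeg N v = 1"
definition is_leaf :: "'a graph \<Rightarrow> 'a \<Rightarrow> bool" where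
  "is_leaf N v \<longleftrightarrow> v \<in> nodes N \<and> indeg N v = 1 \<and> outdeg N v = 0"

definition leaves :: "'a graph \<Rightarrow> 'a set" where
  "leaves N = {v. is_leaf N v}"

definition is_network :: "'a graph \<Rightarrow> bool" where
  "is_network N \<longleftrightarrow>
     finite (nodes N) \<and>
     arcs N \<subseteq> nodes N \<times> nodes N \<and>
     acyclic (arcs N) \<and>
     (\<exists>!r. is_root N r) \<and>
     (\<forall>v \<in> nodes N. is_root N v \<or> is_tree_node N v \<or> is_reticulation N v \<or> is_leaf N v)"

definition is_binary_network :: "'a graph \<Rightarrow> bool" where
  "is_binary_network N \<longleftrightarrow> is_network N \<and>
     (\<forall>v. is_tree_node N v \<longrightarrow> outdeg N v = 2) \<and>
     (\<forall>v. is_reticulation N v \<longrightarrow> indeg N v = 2)"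

definition is_tree :: "'a graph \<Rightarrow> bool" where
  "is_tree N \<longleftrightarrow> is_network N \<and> (\<forall>v. \<not> is_reticulation N v)"

definition parent :: "'a graph \<Rightarrow> 'a \<Rightarrow> 'a" where
  "parent N x = (THE p. (p, x) \<in> arcs N)"

definition suppress :: "'a graph \<Rightarrow> 'a \<Rightarrow> 'a graph" where
  "suppress N v =
     (if v \<in> nodes N \<and> indeg N v = 1 \<and> outdeg N v = 1 then
        (let u = (THE u. (u, v) \<in> arcs N); w = (THE w. (v, w) \<in> arcs N)
         in (nodes N - {v}, {e \<in> arcs N. fst e \<noteq> v \<and> snd e \<noteq> v} \<union> {(u, w)}))
      else N)"

definition is_cherry :: "'a graph \<Rightarrow> 'a \<Rightarrow> 'a \<Rightarrow> bool" where
  "is_cherry N x y \<longleftrightarrow> x \<noteq> y \<and> is_leaf N x \<and> is_leaf N y \<and>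
     (\<exists>p. (p, x) \<in> arcs N \<and> (p, y) \<in> arcs N)"

definition is_reticulated_cherry :: "'a graph \<Rightarrow> 'a \<Rightarrow> 'a \<Rightarrow> bool" where
  "is_reticulated_cherry N x y \<longleftrightarrow> x \<noteq> y \<and> is_leaf N x \<and> is_leaf N y \<and>
     is_reticulation N (parent N x) \<and>
     (\<exists>p. (p, parent N x) \<in> arcs N \<and> (p, y) \<in> arcs N)"

definition reduce_pair :: "'a graph \<Rightarrow> 'a \<times> 'a \<Rightarrow> 'a graph" where
  "reduce_pair N xy =
     (let x = fst xy; y = snd xy; px = parent N x; py = parent N y in
      if is_cherry N x y then
        suppress (nodes N - {x}, {e \<in> arcs N. snd e \<noteq> x}) px
      else if is_reticulated_cherry N x y then
        suppress (suppress (nodes N, arcs N - {(py, px)}) py) px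
      else N)"

definition reduce_seq :: "'a graph \<Rightarrow> ('a \<times> 'a) list \<Rightarrow> 'a graph" where
  "reduce_seq N S = fold (\<lambda>xy M. reduce_pair M xy) S N"

definition is_orchard :: "'a graph \<Rightarrow> bool" where
  "is_orchard N \<longleftrightarrow>
     (\<exists>S. is_tree (reduce_seq N S) \<and> card (leaves (reduce_seq N S)) = 1)"

definition is_internal :: "'a graph \<Rightarrow> 'a \<Rightarrow> bool" where
  "is_internal N v \<longleftrightarrow> v \<in> nodes N \<and> \<not> is_leaf N v"

definition HGT_consistent :: "'a graph \<Rightarrow> ('a \<Rightarrow> real) \<Rightarrow> bool" where
  "HGT_consistent N t \<longleftrightarrow>
     (\<forall>(u, v) \<in> arcs N. t u \<le> t v \<and> (t u = t v \<longrightarrow> is_reticulation N v)) \<and>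
     (\<forall>u. is_internal N u \<longrightarrow> (\<exists>v. (u, v) \<in> arcs N \<and> t u < t v)) \<and>
     (\<forall>r u v. is_reticulation N r \<and> (u, r) \<in> arcs N \<and> (v, r) \<in> arcs N \<and> u \<noteq> v \<longrightarrow>
        ((t u = t r) \<noteq> (t v = t r)))"

end

theory Submission
  imports Defs
begin

text \<open>
  The proof is by induction along a cherry-picking sequence that reduces \<open>N\<close> to a tree with one
  leaf, which consists of a single arc from the root to the leaf. The invariant is strengthened:
  leaves get positive and internal nodes negative labels, which leaves room for fresh values.
  Reducing a cherry \<open>(x, y)\<close> removes \<open>x\<close> and its parent \<open>p\<close>; reducing a reticulated cherry
  removes the parent \<open>p\<close> of \<open>y\<close> and the reticulation \<open>r\<close> above \<open>x\<close>. In both cases the removed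
  nodes are bypassed by new arcs into leaves, so all remaining nodes keep their degrees and types.
  A labelling of the reduced network extends to \<open>N\<close> by giving the removed internal nodes a common
  value strictly between all internal labels and \<open>0\<close>, and the removed leaf a value above all
  labels. The only new tie is then the one across the arc from the tree node \<open>p\<close> to the
  reticulation \<open>r\<close>.
\<close>

section \<open>Local structure of binary networks\<close>

abbreviation parents :: "'a graph \<Rightarrow> 'a \<Rightarrow> 'a set" where
  "parents N v \<equiv> {u. (u, v) \<in> arcs N}"

abbreviation children :: "'a graph \<Rightarrow> 'a \<Rightarrow> 'a set" where
  "children N v \<equiv> {w. (v, w) \<in> arcs N}"

lemma network_finite_nodes: "is_network N \<Longrightarrow> finite (nodes N)"
  by (simp add: is_network_def)

lemma network_arc_nodes: "is_network N \<Longrightarrow> (u, v) \<in> arcs N \<Longrightarrow> u \<in> nodes N \<and> v \<in> nodes N"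
  unfolding is_network_def by blast

lemma network_arc_irrefl: "is_network N \<Longrightarrow> (u, v) \<in> arcs N \<Longrightarrow> u \<noteq> v"
  unfolding is_network_def acyclic_def by (auto dest: r_into_trancl)

lemma binary_network_is_network: "is_binary_network N \<Longrightarrow> is_network N"
  by (simp add: is_binary_network_def)

lemma network_node_cases:
  "is_network N \<Longrightarrow> v \<in> nodes N \<Longrightarrow>
     is_root N v \<or> is_tree_node N v \<or> is_reticulation N v \<or> is_leaf N v"
  unfolding is_network_def by blast

lemma finite_parents: "is_network N \<Longrightarrow> finite (parents N v)"
  by (rule finite_subset[of _ "nodes N"]) (auto dest: network_arc_nodes network_finite_nodes)

lemma finite_children: "is_network N \<Longrightarrow> finite (children N v)"
  by (rule finite_subset[of _ "nodes N"]) (auto dest: network_arc_nodes network_finite_nodes)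

lemma leaf_no_child: "is_network N \<Longrightarrow> is_leaf N x \<Longrightarrow> (x, w) \<notin> arcs N"
  unfolding is_leaf_def outdeg_def using finite_children[of N x] by auto

lemma root_no_parent: "is_network N \<Longrightarrow> is_root N v \<Longrightarrow> (u, v) \<notin> arcs N"
  unfolding is_root_def indeg_def using finite_parents[of N v] by auto

lemma indeg_one_parents: "indeg N v = 1 \<Longrightarrow> \<exists>u. parents N v = {u}"
  unfolding indeg_def by (simp add: card_1_singleton_iff)

lemma indeg_one_parents_eq: "indeg N v = 1 \<Longrightarrow> (u, v) \<in> arcs N \<Longrightarrow> parents N v = {u}"
  using indeg_one_parents[of N v] by (metis mem_Collect_eq singletonD)

lemma outdeg_one_children: "outdeg N v = 1 \<Longrightarrow> \<exists>w. children N v = {w}"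
  unfolding outdeg_def by (simp add: card_1_singleton_iff)

lemma outdeg_one_children_eq: "outdeg N v = 1 \<Longrightarrow> (v, w) \<in> arcs N \<Longrightarrow> children N v = {w}"
  using outdeg_one_children[of N v] by (metis mem_Collect_eq singletonD)

lemma parent_eq: "parents N x = {p} \<Longrightarrow> parent N x = p"
  unfolding parent_def by (auto simp: set_eq_iff)

lemma binary_reticulation_parents:
  assumes "is_binary_network N" "is_reticulation N r" "(p, r) \<in> arcs N"
  obtains q where "q \<noteq> p" "parents N r = {p, q}"
proof -
  have "card (parents N r) = 2"
    using assms unfolding is_binary_network_def indeg_def by auto
  then obtain a b where ab: "parents N r = {a, b}" "a \<noteq> b" by (auto simp: card_2_iff)
  show thesis
  proof (cases "p = a")
    case True
    with ab that[of b] show thesis by simp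
  next
    case False
    with ab assms(3) have "p = b" by auto
    with ab that[of a] show thesis by (simp add: insert_commute)
  qed
qed

lemma binary_two_children:
  assumes bn: "is_binary_network N" and "(p, a) \<in> arcs N" "(p, b) \<in> arcs N" "a \<noteq> b"
  shows "is_tree_node N p \<and> children N p = {a, b}"
proof -
  have nw: "is_network N" using bn by (rule binary_network_is_network)
  have ab: "{a, b} \<subseteq> children N p" using assms by auto
  have "card {a, b} \<le> outdeg N p"
    unfolding outdeg_def using card_mono[OF finite_children[OF nw] ab] .
  then have "2 \<le> outdeg N p" using \<open>a \<noteq> b\<close> by simp
  moreover have "p \<in> nodes N" using network_arc_nodes[OF nw \<open>(p, a) \<in> arcs N\<close>] by simp
  ultimately have tree: "is_tree_node N p"
    using network_node_cases[OF nw] unfolding is_root_def is_reticulation_def is_leaf_def by force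
  then have "card (children N p) = card {a, b}"
    using bn \<open>a \<noteq> b\<close> unfolding is_binary_network_def outdeg_def by simp
  then show ?thesis
    using tree card_subset_eq[OF finite_children[OF nw] ab] by simp
qed

section \<open>Strong HGT-consistent labellings\<close>

definition tree_reticulation_arc :: "'a graph \<Rightarrow> 'a \<Rightarrow> 'a \<Rightarrow> bool" where
  "tree_reticulation_arc N a b \<longleftrightarrow>
     (a, b) \<in> arcs N \<and> is_tree_node N a \<and> is_reticulation N b"

definition ties_on_reticulation_arcs :: "'a graph \<Rightarrow> ('a \<Rightarrow> real) \<Rightarrow> bool" where
  "ties_on_reticulation_arcs N t \<longleftrightarrow>
     (\<forall>a \<in> nodes N. \<forall>b \<in> nodes N. a \<noteq> b \<and> t a = t b \<longrightarrow>
        tree_reticulation_arc N a b \<or> tree_reticulation_arc N b a)"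

definition separates_leaves :: "'a graph \<Rightarrow> ('a \<Rightarrow> real) \<Rightarrow> bool" where
  "separates_leaves N t \<longleftrightarrow>
     (\<forall>v \<in> nodes N. (is_leaf N v \<longrightarrow> 0 < t v) \<and> (\<not> is_leaf N v \<longrightarrow> t v < 0))"

definition strong_HGT_labelling :: "'a graph \<Rightarrow> ('a \<Rightarrow> real) \<Rightarrow> bool" where
  "strong_HGT_labelling N t \<longleftrightarrow>
     HGT_consistent N t \<and> ties_on_reticulation_arcs N t \<and> separates_leaves N t"

lemma strong_HGT_labellingI:
  assumes "\<And>a b. (a, b) \<in> arcs N \<Longrightarrow> t a \<le> t b \<and> (t a = t b \<longrightarrow> is_reticulation N b)"
    and "\<And>u. is_internal N u \<Longrightarrow> \<exists>v. (u, v) \<in> arcs N \<and> t u < t v"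
    and "\<And>r u v. is_reticulation N r \<Longrightarrow> (u, r) \<in> arcs N \<Longrightarrow> (v, r) \<in> arcs N \<Longrightarrow> u \<noteq> v \<Longrightarrow>
           (t u = t r) \<noteq> (t v = t r)"
    and "\<And>a b. a \<in> nodes N \<Longrightarrow> b \<in> nodes N \<Longrightarrow> a \<noteq> b \<Longrightarrow> t a = t b \<Longrightarrow>
           tree_reticulation_arc N a b \<or> tree_reticulation_arc N b a"
    and "\<And>v. v \<in> nodes N \<Longrightarrow> (is_leaf N v \<longrightarrow> 0 < t v) \<and> (\<not> is_leaf N v \<longrightarrow> t v < 0)"
  shows "strong_HGT_labelling N t"
  unfolding strong_HGT_labelling_def HGT_consistent_def ties_on_reticulation_arcs_def
    separates_leaves_def using assms by blast

lemma strong_HGT_labellingD: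
  assumes "strong_HGT_labelling N t"
  shows "\<And>a b. (a, b) \<in> arcs N \<Longrightarrow> t a \<le> t b \<and> (t a = t b \<longrightarrow> is_reticulation N b)"
    and "\<And>u. is_internal N u \<Longrightarrow> \<exists>v. (u, v) \<in> arcs N \<and> t u < t v"
    and "\<And>r u v. is_reticulation N r \<Longrightarrow> (u, r) \<in> arcs N \<Longrightarrow> (v, r) \<in> arcs N \<Longrightarrow> u \<noteq> v \<Longrightarrow>
           (t u = t r) \<noteq> (t v = t r)"
    and "\<And>a b. a \<in> nodes N \<Longrightarrow> b \<in> nodes N \<Longrightarrow> a \<noteq> b \<Longrightarrow> t a = t b \<Longrightarrow>
           tree_reticulation_arc N a b \<or> tree_reticulation_arc N b a"
    and "\<And>v. v \<in> nodes N \<Longrightarrow> is_leaf N v \<Longrightarrow> 0 < t v"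
    and "\<And>v. v \<in> nodes N \<Longrightarrow> \<not> is_leaf N v \<Longrightarrow> t v < 0"
  using assms unfolding strong_HGT_labelling_def HGT_consistent_def ties_on_reticulation_arcs_def
    separates_leaves_def by blast+

lemma fresh_levels:
  fixes t :: "'a \<Rightarrow> real"
  assumes "finite V"
  obtains m F where "m < 0" "0 < F" "\<And>v. v \<in> V \<Longrightarrow> t v < 0 \<Longrightarrow> t v < m"
    "\<And>v. v \<in> V \<Longrightarrow> t v < F"
proof -
  let ?Neg = "insert (-1) (t ` {v \<in> V. t v < 0})" and ?All = "insert 0 (t ` V)"
  have fin: "finite ?Neg" "finite ?All" using assms by simp_all
  have "Max ?Neg \<in> ?Neg" using Max_in[OF fin(1)] by blast
  then have neg: "Max ?Neg < 0" by auto
  show thesis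
  proof (rule that)
    show "Max ?Neg / 2 < 0" using neg by simp
    show "0 < Max ?All + 1" using Max_ge[OF fin(2), of 0] by simp
    fix v assume v: "v \<in> V"
    show "t v < Max ?All + 1" using Max_ge[OF fin(2), of "t v"] v by simp
    assume "t v < 0"
    then have "t v \<le> Max ?Neg" using Max_ge[OF fin(1), of "t v"] v by simp
    then show "t v < Max ?Neg / 2" using neg by simp
  qed
qed

section \<open>Bypassing a set of nodes\<close>

definition bypass :: "'a graph \<Rightarrow> 'a set \<Rightarrow> ('a \<times> 'a) set \<Rightarrow> 'a graph" where
  "bypass N D S = (nodes N - D, {e \<in> arcs N. fst e \<notin> D \<and> snd e \<notin> D} \<union> S)"

lemma nodes_bypass [simp]: "nodes (bypass N D S) = nodes N - D"
  by (simp add: bypass_def nodes_def)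

lemma arcs_bypass [simp]:
  "(u, v) \<in> arcs (bypass N D S) \<longleftrightarrow> (u, v) \<in> arcs N \<and> u \<notin> D \<and> v \<notin> D \<or> (u, v) \<in> S"
  by (auto simp: bypass_def arcs_def)

lemma card_Diff_Un_exchange:
  assumes "finite X" "finite Y" "X \<inter> Y = {}" "card (X \<inter> D) = card Y"
  shows "card (X - D \<union> Y) = card X"
proof -
  have "card (X - D \<union> Y) = card (X - D) + card Y"
    using assms by (intro card_Un_disjoint) auto
  also have "\<dots> = card (X - D) + card (X \<inter> D)"
    using assms(4) by simp
  also have "\<dots> = card X"
    using card_Int_Diff[OF assms(1), of D] by simp
  finally show ?thesis .
qed

text \<open>
  The balance conditions say that every remaining node gains through \<open>S\<close> exactly as many
  neighbours as it loses in \<open>D\<close>, so degrees and hence node types are preserved.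
\<close>

locale bypass_reduction =
  fixes N :: "'a graph" and D :: "'a set" and S :: "('a \<times> 'a) set"
  assumes binary: "is_binary_network N"
    and D_nodes: "D \<subseteq> nodes N"
    and root_notin_D: "\<And>v. is_root N v \<Longrightarrow> v \<notin> D"
    and S_nodes: "S \<subseteq> (nodes N - D) \<times> (nodes N - D)"
    and S_paths: "S \<subseteq> (arcs N)\<^sup>+"
    and S_new: "S \<inter> arcs N = {}"
    and parents_balance: "\<And>w. w \<in> nodes N - D \<Longrightarrow> card (parents N w \<inter> D) = card {u. (u, w) \<in> S}"
    and children_balance: "\<And>w. w \<in> nodes N - D \<Longrightarrow> card (children N w \<inter> D) = card {v. (w, v) \<in> S}"
begin

lemma network: "is_network N"
  using binary by (rule binary_network_is_network)

lemma indeg_bypass: "w \<in> nodes N - D \<Longrightarrow> indeg (bypass N D S) w = indeg N w"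
proof -
  assume w: "w \<in> nodes N - D"
  let ?S = "{u. (u, w) \<in> S}"
  have eq: "parents (bypass N D S) w = parents N w - D \<union> ?S"
    using w by auto
  have "finite ?S"
    by (rule finite_subset[of _ "nodes N"]) (use S_nodes network_finite_nodes[OF network] in auto)
  moreover have "parents N w \<inter> ?S = {}" using S_new by auto
  ultimately have "card (parents N w - D \<union> ?S) = card (parents N w)"
    using card_Diff_Un_exchange[OF finite_parents[OF network]] parents_balance[OF w] by blast
  then show ?thesis unfolding indeg_def eq .
qed

lemma outdeg_bypass: "w \<in> nodes N - D \<Longrightarrow> outdeg (bypass N D S) w = outdeg N w"
proof -
  assume w: "w \<in> nodes N - D"
  let ?S = "{v. (w, v) \<in> S}"
  have eq: "children (bypass N D S) w = children N w - D \<union> ?S"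
    using w by auto
  have "finite ?S"
    by (rule finite_subset[of _ "nodes N"]) (use S_nodes network_finite_nodes[OF network] in auto)
  moreover have "children N w \<inter> ?S = {}" using S_new by auto
  ultimately have "card (children N w - D \<union> ?S) = card (children N w)"
    using card_Diff_Un_exchange[OF finite_children[OF network]] children_balance[OF w] by blast
  then show ?thesis unfolding outdeg_def eq .
qed

lemma node_types_bypass:
  shows "is_root (bypass N D S) w \<longleftrightarrow> w \<in> nodes N - D \<and> is_root N w"
    and "is_tree_node (bypass N D S) w \<longleftrightarrow> w \<in> nodes N - D \<and> is_tree_node N w"
    and "is_reticulation (bypass N D S) w \<longleftrightarrow> w \<in> nodes N - D \<and> is_reticulation N w"
    and "is_leaf (bypass N D S) w \<longleftrightarrow> w \<in> nodes N - D \<and> is_leaf N w"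
    and "is_internal (bypass N D S) w \<longleftrightarrow> w \<in> nodes N - D \<and> is_internal N w"
  unfolding is_root_def is_tree_node_def is_reticulation_def is_leaf_def is_internal_def
  using indeg_bypass outdeg_bypass by auto

lemma arc_bypass_nodes:
  "(a, b) \<in> arcs (bypass N D S) \<Longrightarrow> a \<in> nodes N - D \<and> b \<in> nodes N - D"
  using S_nodes network_arc_nodes[OF network] by auto

lemma arcs_bypass_trancl: "(arcs (bypass N D S))\<^sup>+ \<subseteq> (arcs N)\<^sup>+"
proof -
  have "arcs (bypass N D S) \<subseteq> (arcs N)\<^sup>+"
  proof clarify
    fix a b assume "(a, b) \<in> arcs (bypass N D S)"
    then have "(a, b) \<in> arcs N \<or> (a, b) \<in> S" using arcs_bypass[of a b N D S] by blast
    then show "(a, b) \<in> (arcs N)\<^sup>+"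
      by (auto intro: r_into_trancl' subsetD[OF S_paths])
  qed
  then have "(arcs (bypass N D S))\<^sup>+ \<subseteq> ((arcs N)\<^sup>+)\<^sup>+" by (rule trancl_mono_subset)
  then show ?thesis by simp
qed

lemma binary_network_bypass: "is_binary_network (bypass N D S)"
proof -
  let ?B = "bypass N D S"
  have "acyclic (arcs N)" using network by (simp add: is_network_def)
  then have acyclic: "acyclic (arcs ?B)"
    unfolding acyclic_def by (auto dest: subsetD[OF arcs_bypass_trancl])
  obtain \<rho> where "is_root N \<rho>" and root_unique: "\<And>v. is_root N v \<Longrightarrow> v = \<rho>"
    using network unfolding is_network_def by blast
  then have "is_root ?B \<rho>"
    using root_notin_D node_types_bypass(1) unfolding is_root_def by blast
  then have root: "\<exists>!r. is_root ?B r"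
    using root_unique node_types_bypass(1) by blast
  have "finite (nodes ?B)" using network_finite_nodes[OF network] by simp
  moreover have "arcs ?B \<subseteq> nodes ?B \<times> nodes ?B"
    by (rule subrelI, drule arc_bypass_nodes) simp
  moreover have "\<forall>v \<in> nodes ?B.
      is_root ?B v \<or> is_tree_node ?B v \<or> is_reticulation ?B v \<or> is_leaf ?B v"
    using network_node_cases[OF network] unfolding node_types_bypass by simp
  ultimately have "is_network ?B"
    using acyclic root unfolding is_network_def by blast
  then show ?thesis
    using binary unfolding is_binary_network_def node_types_bypass
    by (simp add: indeg_bypass outdeg_bypass)
qed

lemma tree_reticulation_arc_bypass:
  assumes "\<And>a b. (a, b) \<in> S \<Longrightarrow> is_leaf N b"
    and "tree_reticulation_arc (bypass N D S) a b"
  shows "tree_reticulation_arc N a b"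
proof -
  have "is_reticulation N b"
    using assms(2) node_types_bypass(3) unfolding tree_reticulation_arc_def by blast
  then have "\<not> is_leaf N b" by (simp add: is_leaf_def is_reticulation_def)
  then have "(a, b) \<notin> S" using assms(1) by blast
  then show ?thesis using assms(2)
    unfolding tree_reticulation_arc_def node_types_bypass by simp
qed

lemma strong_HGT_labelling_extend:
  assumes t': "strong_HGT_labelling (bypass N D S) t'"
    and agree: "\<And>v. v \<in> nodes N - D \<Longrightarrow> t v = t' v"
    and S_leaf: "\<And>a b. (a, b) \<in> S \<Longrightarrow> is_leaf N b"
    and S_witness: "\<And>a b. (a, b) \<in> S \<Longrightarrow> \<exists>d \<in> D. (a, d) \<in> arcs N \<and> t a < t d"
    and D_arcs: "\<And>a b. (a, b) \<in> arcs N \<Longrightarrow> a \<in> D \<or> b \<in> D \<Longrightarrow>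
      t a \<le> t b \<and> (t a = t b \<longrightarrow> is_reticulation N b)"
    and D_internal: "\<And>u. u \<in> D \<Longrightarrow> is_internal N u \<Longrightarrow> \<exists>v. (u, v) \<in> arcs N \<and> t u < t v"
    and D_reticulations: "\<And>r u v. is_reticulation N r \<Longrightarrow> (u, r) \<in> arcs N \<Longrightarrow> (v, r) \<in> arcs N \<Longrightarrow>
      u \<noteq> v \<Longrightarrow> r \<in> D \<or> u \<in> D \<or> v \<in> D \<Longrightarrow> (t u = t r) \<noteq> (t v = t r)"
    and D_ties: "\<And>a b. a \<in> nodes N \<Longrightarrow> b \<in> nodes N \<Longrightarrow> a \<noteq> b \<Longrightarrow> t a = t b \<Longrightarrow>
      a \<in> D \<or> b \<in> D \<Longrightarrow> tree_reticulation_arc N a b \<or> tree_reticulation_arc N b a"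
    and D_signs: "\<And>v. v \<in> D \<Longrightarrow> (is_leaf N v \<longrightarrow> 0 < t v) \<and> (\<not> is_leaf N v \<longrightarrow> t v < 0)"
  shows "strong_HGT_labelling N t"
proof -
  note t'_props = strong_HGT_labellingD[OF t']
  show ?thesis
  proof (rule strong_HGT_labellingI)
    fix a b assume ab: "(a, b) \<in> arcs N"
    show "t a \<le> t b \<and> (t a = t b \<longrightarrow> is_reticulation N b)"
    proof (cases "a \<in> D \<or> b \<in> D")
      case True
      then show ?thesis using D_arcs[OF ab] by blast
    next
      case False
      then have "(a, b) \<in> arcs (bypass N D S)" "a \<in> nodes N - D" "b \<in> nodes N - D"
        using ab network_arc_nodes[OF network ab] by auto
      then show ?thesis using t'_props(1) agree node_types_bypass(3) by metis
    qed
  next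
    fix u assume u: "is_internal N u"
    show "\<exists>v. (u, v) \<in> arcs N \<and> t u < t v"
    proof (cases "u \<in> D")
      case True
      then show ?thesis using D_internal u by blast
    next
      case False
      then have "is_internal (bypass N D S) u"
        using u node_types_bypass(5) unfolding is_internal_def by auto
      then obtain v where uv: "(u, v) \<in> arcs (bypass N D S)" "t' u < t' v"
        using t'_props(2) by blast
      show ?thesis
      proof (cases "(u, v) \<in> S")
        case True
        then show ?thesis using S_witness by blast
      next
        case False
        then have "(u, v) \<in> arcs N" using uv(1) by simp
        moreover have "t u < t v" using uv arc_bypass_nodes agree by metis
        ultimately show ?thesis by blast
      qed
    qed
  next
    fix r u v assume r: "is_reticulation N r" and ur: "(u, r) \<in> arcs N" and vr: "(v, r) \<in> arcs N"
      and "u \<noteq> v"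
    show "(t u = t r) \<noteq> (t v = t r)"
    proof (cases "r \<in> D \<or> u \<in> D \<or> v \<in> D")
      case True
      then show ?thesis using D_reticulations r ur vr \<open>u \<noteq> v\<close> by blast
    next
      case False
      then have "(u, r) \<in> arcs (bypass N D S)" "(v, r) \<in> arcs (bypass N D S)"
        using ur vr by auto
      moreover have "is_reticulation (bypass N D S) r"
        using r False node_types_bypass(3) unfolding is_reticulation_def by auto
      ultimately show ?thesis
        using t'_props(3) \<open>u \<noteq> v\<close> arc_bypass_nodes agree by metis
    qed
  next
    fix a b assume a: "a \<in> nodes N" and b: "b \<in> nodes N" and "a \<noteq> b" "t a = t b"
    show "tree_reticulation_arc N a b \<or> tree_reticulation_arc N b a"
    proof (cases "a \<in> D \<or> b \<in> D")
      case True
      then show ?thesis using D_ties a b \<open>a \<noteq> b\<close> \<open>t a = t b\<close> by blast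
    next
      case False
      then have "t' a = t' b" using a b agree \<open>t a = t b\<close> by simp
      then have "tree_reticulation_arc (bypass N D S) a b \<or> tree_reticulation_arc (bypass N D S) b a"
        using t'_props(4) a b False \<open>a \<noteq> b\<close> by simp
      then show ?thesis using tree_reticulation_arc_bypass S_leaf by blast
    qed
  next
    fix v assume v: "v \<in> nodes N"
    show "(is_leaf N v \<longrightarrow> 0 < t v) \<and> (\<not> is_leaf N v \<longrightarrow> t v < 0)"
    proof (cases "v \<in> D")
      case True
      then show ?thesis using D_signs by blast
    next
      case False
      then show ?thesis
        using v t'_props(5,6) agree node_types_bypass(4) by simp
    qed
  qed
qed

end

section \<open>Cherry reductions\<close>

lemma suppress_eq:
  assumes "v \<in> nodes M" "parents M v = {u}" "children M v = {w}"
  shows "suppress M v = (nodes M - {v}, {e \<in> arcs M. fst e \<noteq> v \<and> snd e \<noteq> v} \<union> {(u, w)})"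
proof -
  have "(THE u'. (u', v) \<in> arcs M) = u" "(THE w'. (v, w') \<in> arcs M) = w"
    using assms(2,3) by (auto simp: set_eq_iff)
  then show ?thesis
    using assms unfolding suppress_def indeg_def outdeg_def by (simp add: Let_def)
qed

locale cherry_configuration =
  fixes N :: "'a graph" and x y p g :: 'a
  assumes binary: "is_binary_network N"
    and leaf_x: "is_leaf N x" and leaf_y: "is_leaf N y" and x_ne_y: "x \<noteq> y"
    and children_p: "children N p = {x, y}"
    and parents_p: "parents N p = {g}"
begin

lemma network: "is_network N"
  using binary by (rule binary_network_is_network)

lemma arc_from_p: "(p, w) \<in> arcs N \<longleftrightarrow> w = x \<or> w = y"
  using children_p by blast

lemma arc_to_p: "(u, p) \<in> arcs N \<longleftrightarrow> u = g"
  using parents_p by blast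

lemma arc_to_x: "(u, x) \<in> arcs N \<longleftrightarrow> u = p"
  using indeg_one_parents_eq[of N x p] leaf_x arc_from_p unfolding is_leaf_def by blast

lemma arc_to_y: "(u, y) \<in> arcs N \<longleftrightarrow> u = p"
  using indeg_one_parents_eq[of N y p] leaf_y arc_from_p unfolding is_leaf_def by blast

lemma no_arc_from_leaves: "(x, w) \<notin> arcs N" "(y, w) \<notin> arcs N"
  using leaf_no_child[OF network] leaf_x leaf_y by blast+

lemma tree_node_p: "is_tree_node N p"
  using binary_two_children[OF binary _ _ x_ne_y] arc_from_p by blast

lemma distinct_nodes: "p \<noteq> x" "p \<noteq> y" "g \<noteq> p" "g \<noteq> x" "g \<noteq> y"
  using network_arc_irrefl[OF network] arc_from_p arc_to_p no_arc_from_leaves by metis+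

lemma nodes_in_N: "x \<in> nodes N" "y \<in> nodes N" "p \<in> nodes N" "g \<in> nodes N"
  using network_arc_nodes[OF network] arc_from_p arc_to_p by blast+

lemma reduce_pair_eq: "reduce_pair N (x, y) = bypass N {x, p} {(g, y)}"
proof -
  have cherry: "is_cherry N x y"
    unfolding is_cherry_def using leaf_x leaf_y x_ne_y arc_from_p by blast
  have "parent N x = p" by (rule parent_eq) (use arc_to_x in blast)
  let ?G = "(nodes N - {x}, {e \<in> arcs N. snd e \<noteq> x})"
  have G: "nodes ?G = nodes N - {x}" "arcs ?G = {e \<in> arcs N. snd e \<noteq> x}"
    by (simp_all add: nodes_def arcs_def)
  have "reduce_pair N (x, y) = suppress ?G p"
    unfolding reduce_pair_def using cherry \<open>parent N x = p\<close> by (simp add: Let_def)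
  also have "\<dots> = (nodes ?G - {p}, {e \<in> arcs ?G. fst e \<noteq> p \<and> snd e \<noteq> p} \<union> {(g, y)})"
    by (rule suppress_eq) (use nodes_in_N distinct_nodes arc_to_p arc_from_p x_ne_y in \<open>auto simp: G\<close>)
  also have "\<dots> = bypass N {x, p} {(g, y)}"
    unfolding bypass_def G using no_arc_from_leaves by auto
  finally show ?thesis .
qed

lemma bypass_reduction: "bypass_reduction N {x, p} {(g, y)}"
proof
  show "is_binary_network N" by (rule binary)
  show "{x, p} \<subseteq> nodes N" using nodes_in_N by simp
  show "\<And>v. is_root N v \<Longrightarrow> v \<notin> {x, p}"
    using leaf_x tree_node_p unfolding is_root_def is_leaf_def is_tree_node_def by auto
  show "{(g, y)} \<subseteq> (nodes N - {x, p}) \<times> (nodes N - {x, p})"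
    using nodes_in_N distinct_nodes x_ne_y by auto
  show "{(g, y)} \<subseteq> (arcs N)\<^sup>+"
    using arc_to_p arc_from_p by (blast intro: trancl_into_trancl r_into_trancl)
  show "{(g, y)} \<inter> arcs N = {}" using arc_to_y distinct_nodes by auto
  fix w assume w: "w \<in> nodes N - {x, p}"
  have "parents N w \<inter> {x, p} = (if w = y then {p} else {})"
    using w arc_from_p no_arc_from_leaves by auto
  moreover have "{u. (u, w) \<in> {(g, y)}} = (if w = y then {g} else {})" by auto
  ultimately show "card (parents N w \<inter> {x, p}) = card {u. (u, w) \<in> {(g, y)}}" by simp
  have "children N w \<inter> {x, p} = (if w = g then {p} else {})"
    using w arc_to_p arc_to_x by auto
  moreover have "{v. (w, v) \<in> {(g, y)}} = (if w = g then {y} else {})" by auto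
  ultimately show "card (children N w \<inter> {x, p}) = card {v. (w, v) \<in> {(g, y)}}" by simp
qed

lemma strong_HGT_labelling_lift:
  assumes t': "strong_HGT_labelling (bypass N {x, p} {(g, y)}) t'"
  shows "\<exists>t. strong_HGT_labelling N t"
proof -
  interpret bypass_reduction N "{x, p}" "{(g, y)}" by (rule bypass_reduction)
  note t'_props = strong_HGT_labellingD[OF t']
  obtain m F where m: "m < 0" and F: "0 < F"
    and below_m: "\<And>v. v \<in> nodes N \<Longrightarrow> t' v < 0 \<Longrightarrow> t' v < m"
    and below_F: "\<And>v. v \<in> nodes N \<Longrightarrow> t' v < F"
    using fresh_levels[OF network_finite_nodes[OF network]] by blast
  have kept_not_fresh: "t' v \<noteq> m" "t' v \<noteq> F" if "v \<in> nodes N - {x, p}" for v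
    using that t'_props(5,6) below_m below_F m by (fastforce simp: node_types_bypass)+
  have "g \<in> nodes N - {x, p}" "\<not> is_leaf N g"
    using nodes_in_N distinct_nodes leaf_no_child[OF network] arc_to_p by auto
  then have g_below: "t' g < m" using t'_props(6) below_m by (simp add: node_types_bypass)
  have y_pos: "0 < t' y"
    using t'_props(5) leaf_y nodes_in_N distinct_nodes x_ne_y by (simp add: node_types_bypass)
  define t where "t = t'(p := m, x := F)"
  have t_D: "t p = m" "t x = F" using distinct_nodes unfolding t_def by auto
  have "strong_HGT_labelling N t"
  proof (rule strong_HGT_labelling_extend[OF t'])
    show "\<And>v. v \<in> nodes N - {x, p} \<Longrightarrow> t v = t' v" unfolding t_def by auto
    show "\<And>a b. (a, b) \<in> {(g, y)} \<Longrightarrow> is_leaf N b" using leaf_y by simp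
    show "\<And>a b. (a, b) \<in> {(g, y)} \<Longrightarrow> \<exists>d \<in> {x, p}. (a, d) \<in> arcs N \<and> t a < t d"
      using arc_to_p g_below distinct_nodes t_D unfolding t_def by auto
    show "t a \<le> t b \<and> (t a = t b \<longrightarrow> is_reticulation N b)"
      if "(a, b) \<in> arcs N" "a \<in> {x, p} \<or> b \<in> {x, p}" for a b
      using that arc_from_p arc_to_p arc_to_x no_arc_from_leaves distinct_nodes x_ne_y
        g_below y_pos m F t_D unfolding t_def by auto
    show "\<exists>v. (u, v) \<in> arcs N \<and> t u < t v" if "u \<in> {x, p}" "is_internal N u" for u
      using that leaf_x arc_from_p t_D m F unfolding is_internal_def by auto
    show "(t u = t r) \<noteq> (t v = t r)"
      if "is_reticulation N r" "(u, r) \<in> arcs N" "(v, r) \<in> arcs N"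
        "r \<in> {x, p} \<or> u \<in> {x, p} \<or> v \<in> {x, p}" for r u v
      using that leaf_x leaf_y tree_node_p arc_from_p no_arc_from_leaves
      unfolding is_leaf_def is_tree_node_def is_reticulation_def by auto
    show "tree_reticulation_arc N a b \<or> tree_reticulation_arc N b a"
      if "a \<in> nodes N" "b \<in> nodes N" "a \<noteq> b" "t a = t b" "a \<in> {x, p} \<or> b \<in> {x, p}" for a b
      using that kept_not_fresh t_D m F unfolding t_def by (auto split: if_splits)
    show "(is_leaf N v \<longrightarrow> 0 < t v) \<and> (\<not> is_leaf N v \<longrightarrow> t v < 0)" if "v \<in> {x, p}" for v
      using that leaf_x tree_node_p t_D m F unfolding is_leaf_def is_tree_node_def by auto
  qed
  then show ?thesis by blast
qed

end

lemma cherry_configurationE: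
  assumes binary: "is_binary_network N" and "is_cherry N x y"
  obtains p g where "cherry_configuration N x y p g"
proof -
  obtain p where px: "(p, x) \<in> arcs N" and py: "(p, y) \<in> arcs N"
    and leaves: "is_leaf N x" "is_leaf N y" and "x \<noteq> y"
    using assms(2) unfolding is_cherry_def by blast
  have p: "is_tree_node N p \<and> children N p = {x, y}"
    using binary_two_children[OF binary px py \<open>x \<noteq> y\<close>] .
  then obtain g where g: "parents N p = {g}"
    using indeg_one_parents[of N p] unfolding is_tree_node_def by blast
  have "cherry_configuration N x y p g"
    by unfold_locales (use binary leaves \<open>x \<noteq> y\<close> p g in auto)
  then show thesis by (rule that)
qed

section \<open>Reticulated cherry reductions\<close>

locale reticulated_cherry_configuration =
  fixes N :: "'a graph" and x y p r g q :: 'a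
  assumes binary: "is_binary_network N"
    and leaf_x: "is_leaf N x" and leaf_y: "is_leaf N y"
    and reticulation_r: "is_reticulation N r"
    and children_r: "children N r = {x}"
    and parents_r: "parents N r = {p, q}" and p_ne_q: "p \<noteq> q"
    and children_p: "children N p = {r, y}"
    and parents_p: "parents N p = {g}"
begin

lemma network: "is_network N"
  using binary by (rule binary_network_is_network)

lemma arc_from_p: "(p, w) \<in> arcs N \<longleftrightarrow> w = r \<or> w = y"
  using children_p by blast

lemma arc_to_p: "(u, p) \<in> arcs N \<longleftrightarrow> u = g"
  using parents_p by blast

lemma arc_from_r: "(r, w) \<in> arcs N \<longleftrightarrow> w = x"
  using children_r by blast

lemma arc_to_r: "(u, r) \<in> arcs N \<longleftrightarrow> u = p \<or> u = q"
  using parents_r by blast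

lemma arc_to_x: "(u, x) \<in> arcs N \<longleftrightarrow> u = r"
  using indeg_one_parents_eq[of N x r] leaf_x arc_from_r unfolding is_leaf_def by blast

lemma arc_to_y: "(u, y) \<in> arcs N \<longleftrightarrow> u = p"
  using indeg_one_parents_eq[of N y p] leaf_y arc_from_p unfolding is_leaf_def by blast

lemma no_arc_from_leaves: "(x, w) \<notin> arcs N" "(y, w) \<notin> arcs N"
  using leaf_no_child[OF network] leaf_x leaf_y by blast+

lemma r_ne_y: "r \<noteq> y"
  using reticulation_r leaf_y unfolding is_reticulation_def is_leaf_def by auto

lemma tree_node_p: "is_tree_node N p"
  using binary_two_children[OF binary _ _ r_ne_y] arc_from_p by blast

lemma distinct_nodes:
  "p \<noteq> r" "p \<noteq> x" "p \<noteq> y" "r \<noteq> x" "x \<noteq> y"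
  "g \<noteq> p" "g \<noteq> r" "g \<noteq> x" "g \<noteq> y" "q \<noteq> r" "q \<noteq> x" "q \<noteq> y"
proof -
  have pr: "(p, r) \<in> arcs N" and rx: "(r, x) \<in> arcs N" and gp: "(g, p) \<in> arcs N"
    and qr: "(q, r) \<in> arcs N"
    using arc_from_p arc_from_r arc_to_p arc_to_r by blast+
  show "p \<noteq> r" "r \<noteq> x" "g \<noteq> p" "q \<noteq> r"
    using network_arc_irrefl[OF network] pr rx gp qr by blast+
  show "p \<noteq> x" "p \<noteq> y" "g \<noteq> x" "g \<noteq> y" "q \<noteq> x" "q \<noteq> y"
    using no_arc_from_leaves pr gp qr by blast+
  show "x \<noteq> y" using arc_to_y[of r] rx \<open>p \<noteq> r\<close> by auto
  show "g \<noteq> r" using arc_from_r gp \<open>p \<noteq> x\<close> by blast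
qed

lemma nodes_in_N: "x \<in> nodes N" "y \<in> nodes N" "p \<in> nodes N" "r \<in> nodes N" "g \<in> nodes N" "q \<in> nodes N"
  using network_arc_nodes[OF network] arc_from_p arc_to_p arc_from_r arc_to_r by blast+

lemma reduce_pair_eq: "reduce_pair N (x, y) = bypass N {p, r} {(g, y), (q, x)}"
proof -
  have parent_x: "parent N x = r" by (rule parent_eq) (use arc_to_x in blast)
  have parent_y: "parent N y = p" by (rule parent_eq) (use arc_to_y in blast)
  have kind: "\<not> is_cherry N x y \<and> is_reticulated_cherry N x y"
  proof
    show "\<not> is_cherry N x y"
      unfolding is_cherry_def using arc_to_x arc_to_y distinct_nodes(1) by auto
    show "is_reticulated_cherry N x y"
      unfolding is_reticulated_cherry_def parent_x
      using leaf_x leaf_y distinct_nodes(5) reticulation_r arc_from_p by auto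
  qed
  let ?G1 = "(nodes N, arcs N - {(p, r)})"
  let ?A2 = "{e \<in> arcs N - {(p, r)}. fst e \<noteq> p \<and> snd e \<noteq> p} \<union> {(g, y)}"
  let ?G2 = "(nodes N - {p}, ?A2)"
  have G1: "nodes ?G1 = nodes N" "arcs ?G1 = arcs N - {(p, r)}"
    and G2: "nodes ?G2 = nodes N - {p}" "arcs ?G2 = ?A2"
    by (simp_all add: nodes_def arcs_def)
  have "reduce_pair N (x, y) = suppress (suppress ?G1 p) r"
    unfolding reduce_pair_def using kind parent_x parent_y by (simp add: Let_def)
  also have "suppress ?G1 p = ?G2"
  proof -
    have "parents ?G1 p = {g}" using arc_to_p distinct_nodes(1) unfolding G1 by auto
    moreover have "children ?G1 p = {y}" using arc_from_p r_ne_y unfolding G1 by auto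
    ultimately show ?thesis using suppress_eq[of p ?G1 g y] nodes_in_N unfolding G1 by simp
  qed
  also have "suppress ?G2 r = (nodes N - {p} - {r}, {e \<in> ?A2. fst e \<noteq> r \<and> snd e \<noteq> r} \<union> {(q, x)})"
  proof -
    have "parents ?G2 r = parents N r - {p}" using r_ne_y distinct_nodes(1) unfolding G2 by auto
    then have "parents ?G2 r = {q}" using parents_r p_ne_q by auto
    moreover have "children ?G2 r = children N r - {p}"
      using distinct_nodes(1,7) unfolding G2 by auto
    then have "children ?G2 r = {x}" using children_r distinct_nodes(2) by auto
    ultimately show ?thesis
      using suppress_eq[of r ?G2 q x] nodes_in_N distinct_nodes(1) unfolding G2 by simp
  qed
  also have "\<dots> = bypass N {p, r} {(g, y), (q, x)}"
    unfolding bypass_def using distinct_nodes(7) r_ne_y by auto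
  finally show ?thesis .
qed

lemma bypass_reduction: "bypass_reduction N {p, r} {(g, y), (q, x)}"
proof
  show "is_binary_network N" by (rule binary)
  show "{p, r} \<subseteq> nodes N" using nodes_in_N by simp
  show "\<And>v. is_root N v \<Longrightarrow> v \<notin> {p, r}"
    using tree_node_p reticulation_r unfolding is_root_def is_tree_node_def is_reticulation_def by auto
  show "{(g, y), (q, x)} \<subseteq> (nodes N - {p, r}) \<times> (nodes N - {p, r})"
    using nodes_in_N distinct_nodes r_ne_y p_ne_q by auto
  show "{(g, y), (q, x)} \<subseteq> (arcs N)\<^sup>+"
    using arc_to_p arc_from_p arc_to_r arc_from_r by (blast intro: trancl_into_trancl r_into_trancl)
  show "{(g, y), (q, x)} \<inter> arcs N = {}"
    using arc_to_y arc_to_x distinct_nodes by auto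
  fix w assume w: "w \<in> nodes N - {p, r}"
  show "card (parents N w \<inter> {p, r}) = card {u. (u, w) \<in> {(g, y), (q, x)}}"
  proof -
    consider "w = y" | "w = x" | "w \<noteq> x" "w \<noteq> y" by blast
    then show ?thesis
    proof cases
      case 1
      then have "parents N w \<inter> {p, r} = {p}" "{u. (u, w) \<in> {(g, y), (q, x)}} = {g}"
        using arc_to_y distinct_nodes(5) by auto
      then show ?thesis by simp
    next
      case 2
      then have "parents N w \<inter> {p, r} = {r}" "{u. (u, w) \<in> {(g, y), (q, x)}} = {q}"
        using arc_to_x distinct_nodes(5) by auto
      then show ?thesis by simp
    next
      case 3
      then have "parents N w \<inter> {p, r} = {}" "{u. (u, w) \<in> {(g, y), (q, x)}} = {}"
        using arc_from_p arc_from_r w by auto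
      then show ?thesis by simp
    qed
  qed
  show "card (children N w \<inter> {p, r}) = card {v. (w, v) \<in> {(g, y), (q, x)}}"
  proof -
    have "children N w \<inter> {p, r} = (if w = g then {p} else {}) \<union> (if w = q then {r} else {})"
      "{v. (w, v) \<in> {(g, y), (q, x)}} = (if w = g then {y} else {}) \<union> (if w = q then {x} else {})"
      using w arc_to_p arc_to_r by auto
    then show ?thesis using distinct_nodes(1,5) by simp
  qed
qed

lemma strong_HGT_labelling_lift:
  assumes t': "strong_HGT_labelling (bypass N {p, r} {(g, y), (q, x)}) t'"
  shows "\<exists>t. strong_HGT_labelling N t"
proof -
  interpret bypass_reduction N "{p, r}" "{(g, y), (q, x)}" by (rule bypass_reduction)
  note t'_props = strong_HGT_labellingD[OF t']
  obtain m F where m: "m < 0"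
    and below_m: "\<And>v. v \<in> nodes N \<Longrightarrow> t' v < 0 \<Longrightarrow> t' v < m"
    using fresh_levels[OF network_finite_nodes[OF network]] by blast
  have kept_not_fresh: "t' v \<noteq> m" if "v \<in> nodes N - {p, r}" for v
    using that t'_props(5,6) below_m m by (fastforce simp: node_types_bypass)
  have kept_internal: "t' v < m" if "v \<in> nodes N - {p, r}" "w \<in> children N v" for v w
  proof -
    have "\<not> is_leaf N v" using leaf_no_child[OF network] that(2) by blast
    then show ?thesis using that(1) t'_props(6) below_m by (simp add: node_types_bypass)
  qed
  have g_below: "t' g < m" and q_below: "t' q < m"
    using kept_internal nodes_in_N distinct_nodes p_ne_q arc_to_p arc_to_r by auto
  have leaves_pos: "0 < t' x" "0 < t' y"
    using t'_props(5) leaf_x leaf_y nodes_in_N distinct_nodes r_ne_y by (simp_all add: node_types_bypass)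
  define t where "t = t'(p := m, r := m)"
  have t_D: "t p = m" "t r = m" unfolding t_def by auto
  have t_kept: "t v = t' v" if "v \<notin> {p, r}" for v using that unfolding t_def by auto
  have t_eq_m: "t v = m \<longleftrightarrow> v \<in> {p, r}" if "v \<in> nodes N" for v
    using that kept_not_fresh t_D t_kept by (cases "v \<in> {p, r}") auto
  have "strong_HGT_labelling N t"
  proof (rule strong_HGT_labelling_extend[OF t'])
    show "\<And>v. v \<in> nodes N - {p, r} \<Longrightarrow> t v = t' v" using t_kept by blast
    show "\<And>a b. (a, b) \<in> {(g, y), (q, x)} \<Longrightarrow> is_leaf N b" using leaf_x leaf_y by auto
    show "\<exists>d \<in> {p, r}. (a, d) \<in> arcs N \<and> t a < t d" if "(a, b) \<in> {(g, y), (q, x)}" for a b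
      using that arc_to_p arc_to_r g_below q_below t_D t_kept distinct_nodes p_ne_q by auto
    show "t a \<le> t b \<and> (t a = t b \<longrightarrow> is_reticulation N b)"
      if "(a, b) \<in> arcs N" "a \<in> {p, r} \<or> b \<in> {p, r}" for a b
      using that arc_from_p arc_to_p arc_from_r arc_to_r distinct_nodes r_ne_y p_ne_q
        reticulation_r g_below q_below leaves_pos m t_D t_kept by auto
    show "\<exists>v. (u, v) \<in> arcs N \<and> t u < t v" if "u \<in> {p, r}" "is_internal N u" for u
      using that arc_from_p arc_from_r leaves_pos m t_D t_kept distinct_nodes r_ne_y by auto
    show "(t u = t z) \<noteq> (t v = t z)"
      if "is_reticulation N z" "(u, z) \<in> arcs N" "(v, z) \<in> arcs N" "u \<noteq> v"
        "z \<in> {p, r} \<or> u \<in> {p, r} \<or> v \<in> {p, r}" for z u v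
    proof -
      have "z = r"
        using that tree_node_p leaf_x leaf_y arc_from_p arc_from_r
        unfolding is_tree_node_def is_leaf_def is_reticulation_def by auto
      then show ?thesis
        using that arc_to_r t_D t_kept q_below distinct_nodes p_ne_q by auto
    qed
    show "tree_reticulation_arc N a b \<or> tree_reticulation_arc N b a"
      if "a \<in> nodes N" "b \<in> nodes N" "a \<noteq> b" "t a = t b" "a \<in> {p, r} \<or> b \<in> {p, r}" for a b
    proof -
      have "t a = m \<or> t b = m" using that(5) t_D by auto
      then have "t a = m" "t b = m" using that(4) by auto
      then have "a \<in> {p, r} \<and> b \<in> {p, r}" using that(1,2) t_eq_m by simp
      then show ?thesis
        using that arc_from_p tree_node_p reticulation_r unfolding tree_reticulation_arc_def by auto
    qed
    show "(is_leaf N v \<longrightarrow> 0 < t v) \<and> (\<not> is_leaf N v \<longrightarrow> t v < 0)" if "v \<in> {p, r}" for v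
      using that tree_node_p reticulation_r t_D m
      unfolding is_leaf_def is_tree_node_def is_reticulation_def by auto
  qed
  then show ?thesis by blast
qed

end

lemma reticulated_cherry_configurationE:
  assumes binary: "is_binary_network N" and "is_reticulated_cherry N x y"
  obtains p r g q where "reticulated_cherry_configuration N x y p r g q"
proof -
  have leaves: "is_leaf N x" "is_leaf N y" and ret: "is_reticulation N (parent N x)"
    using assms(2) unfolding is_reticulated_cherry_def by blast+
  obtain r where "parents N x = {r}"
    using leaves(1) indeg_one_parents[of N x] unfolding is_leaf_def by blast
  then have r: "parent N x = r" "(r, x) \<in> arcs N" by (auto intro: parent_eq)
  obtain p where pr: "(p, r) \<in> arcs N" and py: "(p, y) \<in> arcs N"
    using assms(2) r(1) unfolding is_reticulated_cherry_def by blast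
  have "r \<noteq> y" using ret r(1) leaves(2) unfolding is_reticulation_def is_leaf_def by auto
  then have p: "is_tree_node N p \<and> children N p = {r, y}"
    using binary_two_children[OF binary pr py] by blast
  then obtain g where g: "parents N p = {g}"
    using indeg_one_parents[of N p] unfolding is_tree_node_def by blast
  obtain q where q: "q \<noteq> p" "parents N r = {p, q}"
    using binary_reticulation_parents[OF binary _ pr] ret r(1) by blast
  have "children N r = {x}"
    using outdeg_one_children_eq[of N r x] ret r unfolding is_reticulation_def by simp
  then have "reticulated_cherry_configuration N x y p r g q"
    by unfold_locales (use binary leaves ret r(1) p g q in auto)
  then show thesis by (rule that)
qed

section \<open>Trees with a single leaf\<close>

lemma sum_indeg_eq_card_arcs: "is_network N \<Longrightarrow> (\<Sum>v\<in>nodes N. indeg N v) = card (arcs N)"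
proof -
  assume nw: "is_network N"
  let ?X = "SIGMA v:nodes N. parents N v"
  have "arcs N = prod.swap ` ?X" using network_arc_nodes[OF nw] by (auto simp: image_iff)
  then have "card (arcs N) = card (prod.swap ` ?X)" by (rule arg_cong)
  also have "\<dots> = card ?X" by (rule card_image) (simp add: inj_on_def)
  also have "\<dots> = (\<Sum>v\<in>nodes N. card (parents N v))"
    by (rule card_SigmaI) (use network_finite_nodes[OF nw] finite_parents[OF nw] in auto)
  finally show ?thesis unfolding indeg_def by simp
qed

lemma sum_outdeg_eq_card_arcs: "is_network N \<Longrightarrow> (\<Sum>v\<in>nodes N. outdeg N v) = card (arcs N)"
proof -
  assume nw: "is_network N"
  have "arcs N = (SIGMA v:nodes N. children N v)" using network_arc_nodes[OF nw] by auto
  then have "card (arcs N) = card (SIGMA v:nodes N. children N v)" by (rule arg_cong)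
  also have "\<dots> = (\<Sum>v\<in>nodes N. card (children N v))"
    by (rule card_SigmaI) (use network_finite_nodes[OF nw] finite_children[OF nw] in auto)
  finally show ?thesis unfolding outdeg_def by simp
qed

lemma single_leaf_binary_tree_nodes:
  assumes binary: "is_binary_network N" and "is_tree N"
    and root: "is_root N \<rho>" and leaves: "leaves N = {l}"
  shows "nodes N = {\<rho>, l}"
proof -
  have nw: "is_network N" using binary by (rule binary_network_is_network)
  define T where "T = {v \<in> nodes N. is_tree_node N v}"
  have leaf_l: "is_leaf N l" using leaves unfolding leaves_def by blast
  have "v = \<rho> \<or> v = l \<or> v \<in> T" if "v \<in> nodes N" for v
  proof -
    have "\<not> is_reticulation N v" using \<open>is_tree N\<close> by (simp add: is_tree_def)
    moreover have "is_root N v \<Longrightarrow> v = \<rho>" using nw root unfolding is_network_def by blast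
    moreover have "is_leaf N v \<Longrightarrow> v = l" using leaves unfolding leaves_def by blast
    ultimately show ?thesis using network_node_cases[OF nw that] that unfolding T_def by blast
  qed
  then have nodes_eq: "nodes N = insert \<rho> (insert l T)"
    using root leaf_l unfolding T_def is_root_def is_leaf_def by blast
  have fin: "finite T" using network_finite_nodes[OF nw] unfolding T_def by simp
  have "l \<notin> T" "\<rho> \<notin> insert l T"
    using root leaf_l unfolding T_def is_root_def is_leaf_def is_tree_node_def by auto
  then have sum_eq: "(\<Sum>v\<in>nodes N. f v) = f \<rho> + f l + (\<Sum>v\<in>T. f v)" for f :: "'a \<Rightarrow> nat"
    unfolding nodes_eq using fin by simp
  have tree_degrees: "indeg N v = 1" "outdeg N v = 2" if "v \<in> T" for v
    using that binary unfolding T_def is_binary_network_def is_tree_node_def by auto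
  have "(\<Sum>v\<in>T. indeg N v) = card T" "(\<Sum>v\<in>T. outdeg N v) = 2 * card T"
    using sum.cong[OF refl tree_degrees(1), of T] sum.cong[OF refl tree_degrees(2), of T] by simp_all
  then have "card T + 1 = 1 + 2 * card T"
    using sum_eq[of "indeg N"] sum_eq[of "outdeg N"] root leaf_l
      sum_indeg_eq_card_arcs[OF nw] sum_outdeg_eq_card_arcs[OF nw]
    unfolding is_root_def is_leaf_def by simp
  then have "T = {}" using fin by simp
  then show ?thesis using nodes_eq by simp
qed

lemma strong_HGT_labelling_single_leaf_tree:
  assumes binary: "is_binary_network N" and "is_tree N" and "card (leaves N) = 1"
  shows "\<exists>t. strong_HGT_labelling N t"
proof -
  have nw: "is_network N" using binary by (rule binary_network_is_network)
  obtain \<rho> where root: "is_root N \<rho>" using nw unfolding is_network_def by blast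
  obtain l where leaves: "leaves N = {l}" using \<open>card (leaves N) = 1\<close> by (auto simp: card_1_singleton_iff)
  have nodes: "nodes N = {\<rho>, l}"
    using single_leaf_binary_tree_nodes[OF binary \<open>is_tree N\<close> root leaves] .
  have leaf_l: "is_leaf N l" using leaves unfolding leaves_def by blast
  then have "\<rho> \<noteq> l" using root unfolding is_root_def is_leaf_def by auto
  have arc: "a = \<rho> \<and> b = l" if ab: "(a, b) \<in> arcs N" for a b
  proof -
    have "a \<in> {\<rho>, l}" "b \<in> {\<rho>, l}" using network_arc_nodes[OF nw ab] nodes by auto
    moreover have "a \<noteq> b" using network_arc_irrefl[OF nw ab] .
    moreover have "b \<noteq> \<rho>" using root_no_parent[OF nw root] ab by blast
    ultimately show ?thesis by auto
  qed
  obtain w where "(\<rho>, w) \<in> arcs N"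
    using outdeg_one_children[of N \<rho>] root unfolding is_root_def by blast
  define t :: "'a \<Rightarrow> real" where "t v = (if v = \<rho> then -1 else 1)" for v
  have "strong_HGT_labelling N t"
  proof (rule strong_HGT_labellingI)
    show "t a \<le> t b \<and> (t a = t b \<longrightarrow> is_reticulation N b)" if "(a, b) \<in> arcs N" for a b
      using arc[OF that] \<open>\<rho> \<noteq> l\<close> unfolding t_def by simp
    show "\<exists>v. (u, v) \<in> arcs N \<and> t u < t v" if "is_internal N u" for u
    proof -
      have "u = \<rho>" using that nodes leaf_l unfolding is_internal_def by auto
      moreover have "w = l" using arc \<open>(\<rho>, w) \<in> arcs N\<close> by blast
      ultimately show ?thesis using \<open>(\<rho>, w) \<in> arcs N\<close> \<open>\<rho> \<noteq> l\<close> unfolding t_def by auto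
    qed
    show "(t u = t r) \<noteq> (t v = t r)" if "is_reticulation N r" for r u v :: 'a
      using that \<open>is_tree N\<close> by (simp add: is_tree_def)
    show "tree_reticulation_arc N a b \<or> tree_reticulation_arc N b a"
      if "a \<in> nodes N" "b \<in> nodes N" "a \<noteq> b" "t a = t b" for a b
      using that nodes unfolding t_def by auto
    show "(is_leaf N v \<longrightarrow> 0 < t v) \<and> (\<not> is_leaf N v \<longrightarrow> t v < 0)" if "v \<in> nodes N" for v
      using that nodes leaf_l root \<open>\<rho> \<noteq> l\<close> unfolding t_def is_root_def is_leaf_def by auto
  qed
  then show ?thesis by blast
qed

section \<open>Induction along a cherry-picking sequence\<close>

lemma reduce_pair_binary_and_labelling_lift:
  assumes binary: "is_binary_network N"
  shows "is_binary_network (reduce_pair N (x, y)) \<and>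
    ((\<exists>t'. strong_HGT_labelling (reduce_pair N (x, y)) t') \<longrightarrow> (\<exists>t. strong_HGT_labelling N t))"
proof (cases "is_cherry N x y")
  case True
  then obtain p g where "cherry_configuration N x y p g"
    using cherry_configurationE[OF binary] by blast
  then interpret cherry_configuration N x y p g .
  have "is_binary_network (bypass N {x, p} {(g, y)})"
    by (rule bypass_reduction.binary_network_bypass[OF bypass_reduction])
  then show ?thesis
    unfolding reduce_pair_eq using strong_HGT_labelling_lift by blast
next
  case not_cherry: False
  show ?thesis
  proof (cases "is_reticulated_cherry N x y")
    case True
    then obtain p r g q where "reticulated_cherry_configuration N x y p r g q"
      using reticulated_cherry_configurationE[OF binary] by blast
    then interpret reticulated_cherry_configuration N x y p r g q .
    have "is_binary_network (bypass N {p, r} {(g, y), (q, x)})"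
      by (rule bypass_reduction.binary_network_bypass[OF bypass_reduction])
    then show ?thesis
      unfolding reduce_pair_eq using strong_HGT_labelling_lift by blast
  next
    case False
    then have "reduce_pair N (x, y) = N"
      using not_cherry unfolding reduce_pair_def by (simp add: Let_def)
    then show ?thesis using binary by simp
  qed
qed

lemma strong_HGT_labelling_if_reduces_to_single_leaf_tree:
  "is_binary_network N \<Longrightarrow> is_tree (reduce_seq N S) \<Longrightarrow> card (leaves (reduce_seq N S)) = 1 \<Longrightarrow>
    \<exists>t. strong_HGT_labelling N t"
proof (induction S arbitrary: N)
  case Nil
  then show ?case using strong_HGT_labelling_single_leaf_tree by (simp add: reduce_seq_def)
next
  case (Cons xy S)
  obtain x y where xy: "xy = (x, y)" by (cases xy)
  have "reduce_seq N (xy # S) = reduce_seq (reduce_pair N (x, y)) S"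
    unfolding reduce_seq_def xy by simp
  moreover have "is_binary_network (reduce_pair N (x, y))"
    using reduce_pair_binary_and_labelling_lift[OF Cons.prems(1)] by blast
  ultimately obtain t' where "strong_HGT_labelling (reduce_pair N (x, y)) t'"
    using Cons.IH Cons.prems(2,3) by fastforce
  then show ?case using reduce_pair_binary_and_labelling_lift[OF Cons.prems(1)] by blast
qed

theorem mainTheorem3:
  fixes N :: "'a graph"
  assumes "is_binary_network N"
    and "is_orchard N"
  shows "\<exists>t :: 'a \<Rightarrow> real. HGT_consistent N t \<and>
           (\<forall>a \<in> nodes N. \<forall>b \<in> nodes N. a \<noteq> b \<and> t a = t b \<longrightarrow>
              ((a, b) \<in> arcs N \<and> is_tree_node N a \<and> is_reticulation N b) \<or>
              ((b, a) \<in> arcs N \<and> is_tree_node N b \<and> is_reticulation N a))"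
proof -
  obtain S where "is_tree (reduce_seq N S)" "card (leaves (reduce_seq N S)) = 1"
    using assms(2) unfolding is_orchard_def by blast
  then obtain t where "strong_HGT_labelling N t"
    using strong_HGT_labelling_if_reduces_to_single_leaf_tree[OF assms(1)] by blast
  then show ?thesis
    unfolding strong_HGT_labelling_def ties_on_reticulation_arcs_def tree_reticulation_arc_def
    by blast
qed

end
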